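(* Let $n\ge1$ and $a\in L^\infty(D_n)$. The following are equivalent: (0) $a$ is a quasi-hyperbolic moment map symbol, i.e. there is a measurable function $g$ on $\mu(D_n)$ with $a=g\circ\mu$ almost everywhere; (1) $a$ is $\mathbb{T}^{n-1}\times\mathbb{R}_+$-invariant, i.e. for every $(t',s)\in\mathbb{T}^{n-1}\times\mathbb{R}_+$, $a((t',s)\cdot z)=a(z)$ for almost every $z\in D_n$; (2) $a=f\circ H$ almost everywhere for some measurable function $f$; (3) $a=f\circ\widetilde{H}$ almost everywhere for some measurable function $f$.
   Context: $D_n=\{z=(z',z_n)\in\mathbb{C}^{n-1}\times\mathbb{C}:\operatorname{Im}z_n-|z'|^2>0\}$ (the Siegel domain). The quasi-hyperbolic action of $\mathbb{T}^{n-1}\times\mathbb{R}_+$ ($\mathbb{T}$ the unit circle, $\mathbb{R}_+=(0,\infty)$) on $D_n$ is $(t',s)\cdot z=(s^{1/2}t_1z_1,\dots,s^{1/2}t_{n-1}z_{n-1},sz_n)$. Its moment map (with respect to the Bergman Kähler form of $D_n$) is $\mu(z)=-\frac{1}{2(\operatorname{Im}z_n-|z'|^2)}(2|z_1|^2,\dots,2|z_{n-1}|^2,\operatorname{Re}z_n)$. Further, $H(z)=\frac{1}{\operatorname{Im}z_n-|z'|^2}(|z_1|^2,\dots,|z_{n-1}|^2,\operatorname{Re}z_n)$ and $\widetilde{H}(z)=\Big(\frac{|z_1|^2}{\operatorname{Im}z_n-|z'|^2},\dots,\frac{|z_{n-1}|^2}{\operatorname{Im}z_n-|z'|^2},\frac{\operatorname{Re}z_n}{\operatorname{Im}z_n}\Big)$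 for $z\in D_n$. *)

theory Defs
  imports "HOL-Analysis.Analysis"
begin

text \<open>Points of C^n are modelled as complex ^ 'n, where 'n is a finite type with n = CARD('n)
  elements, and the distinguished index l plays the role of the last coordinate z_n; the
  remaining indices are the coordinates of z'.\<close>

definition rho :: "'n::finite \<Rightarrow> complex ^ 'n \<Rightarrow> real" where
  "rho l z = Im (z $ l) - (\<Sum>j\<in>UNIV - {l}. (cmod (z $ j))\<^sup>2)"

definition siegel :: "'n::finite \<Rightarrow> (complex ^ 'n) set" where
  "siegel l = {z. rho l z > 0}"

text \<open>Quasi-hyperbolic action of (t', s); t l is irrelevant.\<close>
definition qh_action :: "'n::finite \<Rightarrow> ('n \<Rightarrow> complex) \<Rightarrow> real \<Rightarrow> complex ^ 'n \<Rightarrow> complex ^ 'n" where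
  "qh_action l t s z = (\<chi> j. if j = l then complex_of_real s * z $ l
                              else complex_of_real (sqrt s) * t j * z $ j)"

definition qh_moment :: "'n::finite \<Rightarrow> complex ^ 'n \<Rightarrow> real ^ 'n" where
  "qh_moment l z = (\<chi> j. - (1 / (2 * rho l z)) *
       (if j = l then Re (z $ l) else 2 * (cmod (z $ j))\<^sup>2))"

definition qh_H :: "'n::finite \<Rightarrow> complex ^ 'n \<Rightarrow> real ^ 'n" where
  "qh_H l z = (\<chi> j. (1 / rho l z) *
       (if j = l then Re (z $ l) else (cmod (z $ j))\<^sup>2))"

definition qh_Htilde :: "'n::finite \<Rightarrow> complex ^ 'n \<Rightarrow> real ^ 'n" where
  "qh_Htilde l z = (\<chi> j. if j = l then Re (z $ l) / Im (z $ l)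
                          else (cmod (z $ j))\<^sup>2 / rho l z)"

definition Linfty_on :: "('a::euclidean_space) set \<Rightarrow> ('a \<Rightarrow> complex) \<Rightarrow> bool" where
  "Linfty_on D a \<longleftrightarrow> a \<in> borel_measurable (lebesgue_on D) \<and>
     (\<exists>C. AE z in lebesgue_on D. cmod (a z) \<le> C)"

end

theory Submission imports Defs begin

(* The moment map is constant on orbits, and conversely its fibres in D_n are single orbits:
   rescaling by s = 1/rho(z) and rotating every z_j (j <> l) onto the positive reals moves z to a
   point that depends only on mu(z).  Hence functions of mu are invariant, as the action is linear
   and preserves null sets.  For an invariant symbol a, write the group in exponential coordinates
   as the additive group R^n; Fubini shows that for almost every z the Borel representative of a
   is a.e. constant on the orbit of z, so averaging it over a unit box of the group, applied to the
   orbit representative attached to mu(z), recovers a(z) and gives a Borel function of mu.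
   Finally H and H~ are Borel functions of mu on D_n and vice versa. *)

lemma AE_lebesgue_on_iff_AE_lborel:
  assumes "D \<in> sets borel"
  shows "(AE z in lebesgue_on D. P z) \<longleftrightarrow> (AE z in lborel. z \<in> D \<longrightarrow> P z)"
proof -
  have "D \<inter> space lebesgue \<in> sets lebesgue" using assms by auto
  then show ?thesis by (simp add: AE_restrict_space_iff AE_completion_iff)
qed

lemma AE_lborel_comp:
  fixes f g :: "'a::euclidean_space \<Rightarrow> 'a"
  assumes "g differentiable_on UNIV" "\<And>x. g (f x) = x" "AE x in lborel. P x"
  shows "AE x in lborel. P (f x)"
proof -
  from assms(3) have "AE x in lebesgue. P x" by (simp add: AE_completion_iff)
  then obtain N where N: "N \<in> null_sets lebesgue" "{x. \<not> P x} \<subseteq> N"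
    unfolding eventually_ae_filter by auto
  have "negligible (g ` N)"
    using N(1) assms(1) negligible_iff_null_sets
    by (blast intro: negligible_differentiable_image_negligible differentiable_on_subset)
  then have "g ` N \<in> null_sets lebesgue" using negligible_iff_null_sets by blast
  moreover have "{x \<in> space lebesgue. \<not> P (f x)} \<subseteq> g ` N"
    using N(2) assms(2) by (auto intro!: image_eqI)
  ultimately have "AE x in lebesgue. P (f x)" by (rule AE_I')
  then show ?thesis by (simp add: AE_completion_iff)
qed

lemma AE_lborel_translate:
  fixes w :: "'a::euclidean_space"
  assumes "AE v in lborel. P v"
  shows "AE v in lborel. P (w + v)"
  by (rule AE_lborel_comp[where g = "\<lambda>x. x - w"]) (auto intro: assms)

lemma AE_lborel_AE_lborel_swap:
  fixes P :: "'a::euclidean_space \<Rightarrow> 'b::euclidean_space \<Rightarrow> bool"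
  assumes "{p \<in> space (lborel \<Otimes>\<^sub>M lborel). P (fst p) (snd p)} \<in> sets (lborel \<Otimes>\<^sub>M lborel)"
    and "\<And>v. AE z in lborel. P v z"
  shows "AE z in lborel. AE v in lborel. P v z"
  using lborel_pair.AE_commute[OF assms(1)] assms(2) by (simp add: always_eventually)

lemma borel_measurable_lebesgue_on_AE_eq_borel:
  fixes a :: "'a::euclidean_space \<Rightarrow> complex"
  assumes "a \<in> borel_measurable (lebesgue_on D)" "D \<in> sets borel"
  obtains b where "b \<in> borel_measurable borel" "AE z in lborel. z \<in> D \<longrightarrow> a z = b z"
proof -
  define a0 where "a0 z = (if z \<in> D then a z else 0)" for z
  have "a0 \<in> borel_measurable lebesgue"
    unfolding a0_def using borel_measurable_if[of D a] assms by auto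
  then have "(\<lambda>z. Re (a0 z)) \<in> borel_measurable (completion lborel)"
    and "(\<lambda>z. Im (a0 z)) \<in> borel_measurable (completion lborel)" by auto
  then obtain r i where r: "r \<in> borel_measurable lborel" "AE z in lborel. Re (a0 z) = r z"
    and i: "i \<in> borel_measurable lborel" "AE z in lborel. Im (a0 z) = i z"
    by (metis completion_ex_borel_measurable_real)
  show ?thesis
  proof
    show "(\<lambda>z. Complex (r z) (i z)) \<in> borel_measurable borel"
      using r(1) i(1) by (simp add: borel_measurable_complex_iff)
    show "AE z in lborel. z \<in> D \<longrightarrow> a z = Complex (r z) (i z)"
      using r(2) i(2) by eventually_elim (auto simp: a0_def complex_eq_iff)
  qed
qed

lemma measure_lborel_unit_box: "measure lborel (cbox (0::'a::euclidean_space) One) = 1"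
proof -
  have "One \<bullet> b = (1::real)" if "b \<in> (Basis :: 'a set)" for b
    using that by (simp add: inner_sum_left sum.If_cases inner_Basis)
  then show ?thesis by (simp add: measure_lborel_cbox_eq)
qed

lemma borel_measurable_vec_neg_except:
  fixes c :: "real ^ 'n::finite \<Rightarrow> real"
  assumes "continuous_on UNIV c"
  shows "(\<lambda>x. \<chi> j. if j = l then c x else - x $ j) \<in> borel_measurable borel"
proof (intro borel_measurable_continuous_onI continuous_on_vec_lambda)
  show "continuous_on UNIV (\<lambda>x. if j = l then c x else - x $ j)" for j
    using assms by (cases "j = l") (auto intro!: continuous_intros)
qed

lemma cis_minus_Arg_mult: "cis (- Arg x) * x = complex_of_real (cmod x)"
  by (metis cis_mult add.right_inverse cis_zero mult.assoc mult.left_neutral rcis_cmod_Arg rcis_def mult.commute)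

definition ae_factors_through ::
    "'a::euclidean_space set \<Rightarrow> ('a \<Rightarrow> 'b::euclidean_space) \<Rightarrow> ('a \<Rightarrow> complex) \<Rightarrow> bool" where
  "ae_factors_through D F a \<longleftrightarrow> (\<exists>g. g \<in> borel_measurable (restrict_space borel (F ` D)) \<and>
      (AE z in lebesgue_on D. a z = g (F z)))"

lemma ae_factors_through_reparam:
  assumes "\<exists>\<phi> \<in> borel_measurable borel. \<forall>z \<in> D. F2 z = \<phi> (F1 z)"
    and "ae_factors_through D F2 a"
  shows "ae_factors_through D F1 a"
proof -
  obtain \<phi> where \<phi>: "\<phi> \<in> borel_measurable borel" "\<And>z. z \<in> D \<Longrightarrow> F2 z = \<phi> (F1 z)"
    using assms(1) by blast
  obtain f where f: "f \<in> borel_measurable (restrict_space borel (F2 ` D))"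
    and a: "AE z in lebesgue_on D. a z = f (F2 z)"
    using assms(2) unfolding ae_factors_through_def by blast
  have "\<phi> \<in> restrict_space borel (F1 ` D) \<rightarrow>\<^sub>M restrict_space borel (F2 ` D)"
    using \<phi>(2) by (intro measurable_restrict_space3[OF \<phi>(1)]) auto
  with f have "(\<lambda>x. f (\<phi> x)) \<in> borel_measurable (restrict_space borel (F1 ` D))"
    by (rule measurable_compose[rotated])
  moreover have "AE z in lebesgue_on D. z \<in> D" by (rule AE_I2) simp
  with a have "AE z in lebesgue_on D. a z = f (\<phi> (F1 z))"
    by eventually_elim (simp add: \<phi>(2))
  ultimately show ?thesis unfolding ae_factors_through_def by blast
qed

lemma open_siegel: "open (siegel l)"
proof -
  have "continuous_on UNIV (rho l)"
    unfolding rho_def by (intro continuous_intros)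
  then have "open (rho l -` {0<..})"
    by (intro continuous_open_vimage) (auto simp: continuous_on_eq_continuous_at)
  moreover have "siegel l = rho l -` {0<..}" by (auto simp: siegel_def)
  ultimately show ?thesis by simp
qed

lemma siegel_in_borel [measurable]: "siegel l \<in> sets borel"
  using open_siegel by (rule borel_open)

lemma Im_pos_of_siegel:
  assumes "z \<in> siegel l"
  shows "Im (z $ l) > 0"
proof -
  have "0 \<le> (\<Sum>j\<in>UNIV - {l}. (cmod (z $ j))\<^sup>2)" by (simp add: sum_nonneg)
  with assms show ?thesis by (simp add: siegel_def rho_def)
qed

lemma rho_qh_action:
  assumes "\<forall>j. j \<noteq> l \<longrightarrow> cmod (t j) = 1" "s > 0"
  shows "rho l (qh_action l t s z) = s * rho l z"
proof -
  have "(\<Sum>j\<in>UNIV - {l}. (cmod (qh_action l t s z $ j))\<^sup>2) = (\<Sum>j\<in>UNIV - {l}. s * (cmod (z $ j))\<^sup>2)"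
    using assms by (intro sum.cong) (auto simp: qh_action_def norm_mult power_mult_distrib)
  then show ?thesis using assms
    by (simp add: rho_def qh_action_def sum_distrib_left[symmetric] algebra_simps)
qed

lemma qh_action_in_siegel:
  assumes "\<forall>j. j \<noteq> l \<longrightarrow> cmod (t j) = 1" "s > 0" "z \<in> siegel l"
  shows "qh_action l t s z \<in> siegel l"
  using assms rho_qh_action[of l t s z, OF assms(1,2)] by (simp add: siegel_def)

lemma qh_moment_qh_action:
  assumes "\<forall>j. j \<noteq> l \<longrightarrow> cmod (t j) = 1" "s > 0"
  shows "qh_moment l (qh_action l t s z) = qh_moment l z"
  using assms rho_qh_action[of l t s z, OF assms]
  by (auto simp: qh_moment_def vec_eq_iff qh_action_def norm_mult power_mult_distrib)

lemma linear_qh_action: "linear (qh_action l t s)"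
  by (rule linearI) (auto simp: qh_action_def vec_eq_iff algebra_simps scaleR_conv_of_real)

lemma qh_action_inverse:
  assumes "\<And>j. j \<noteq> l \<Longrightarrow> t j \<noteq> 0" "s > 0"
  shows "qh_action l (\<lambda>j. inverse (t j)) (1/s) (qh_action l t s z) = z"
  using assms unfolding qh_action_def
  by (auto simp: vec_eq_iff real_sqrt_divide field_simps)

lemma AE_lborel_qh_action:
  assumes "\<forall>j. j \<noteq> l \<longrightarrow> cmod (t j) = 1" "s > 0" "AE z in lborel. P z"
  shows "AE z in lborel. P (qh_action l t s z)"
proof (rule AE_lborel_comp[where g = "qh_action l (\<lambda>j. inverse (t j)) (1/s)"])
  show "qh_action l (\<lambda>j. inverse (t j)) (1/s) differentiable_on UNIV"
    by (intro linear_imp_differentiable_on linear_qh_action)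
  show "qh_action l (\<lambda>j. inverse (t j)) (1/s) (qh_action l t s z) = z" for z
    using assms by (intro qh_action_inverse) force+
qed (rule assms(3))

definition qh_invariant :: "'n::finite \<Rightarrow> (complex ^ 'n \<Rightarrow> complex) \<Rightarrow> bool" where
  "qh_invariant l a \<longleftrightarrow> (\<forall>t s. (\<forall>j. j \<noteq> l \<longrightarrow> cmod (t j) = 1) \<longrightarrow> s > 0 \<longrightarrow>
      (AE z in lebesgue_on (siegel l). a (qh_action l t s z) = a z))"

lemma qh_moment_symbol_imp_invariant:
  assumes "ae_factors_through (siegel l) (qh_moment l) a"
  shows "qh_invariant l a"
  unfolding qh_invariant_def
proof (intro allI impI)
  fix t s assume t_unit: "\<forall>j. j \<noteq> l \<longrightarrow> cmod (t j) = 1" and s_pos: "(s::real) > 0"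
  obtain g where "AE z in lebesgue_on (siegel l). a z = g (qh_moment l z)"
    using assms unfolding ae_factors_through_def by blast
  then have a: "AE z in lborel. z \<in> siegel l \<longrightarrow> a z = g (qh_moment l z)"
    by (simp add: AE_lebesgue_on_iff_AE_lborel)
  have "AE z in lborel. z \<in> siegel l \<longrightarrow> a (qh_action l t s z) = a z"
    using AE_lborel_qh_action[OF t_unit s_pos a] a
    by eventually_elim
      (auto simp: qh_action_in_siegel[OF t_unit s_pos] qh_moment_qh_action[OF t_unit s_pos])
  then show "AE z in lebesgue_on (siegel l). a (qh_action l t s z) = a z"
    by (simp add: AE_lebesgue_on_iff_AE_lborel)
qed

text \<open>The action in exponential coordinates: the group becomes the additive group
  real ^ 'n, whose Haar measure is lborel.\<close>
definition qh_exp_action :: "'n::finite \<Rightarrow> real ^ 'n \<Rightarrow> complex ^ 'n \<Rightarrow> complex ^ 'n" where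
  "qh_exp_action l v = qh_action l (\<lambda>j. cis (v $ j)) (exp (v $ l))"

lemma qh_exp_action_add: "qh_exp_action l v (qh_exp_action l w z) = qh_exp_action l (v + w) z"
  unfolding qh_exp_action_def qh_action_def
  by (auto simp: vec_eq_iff exp_add real_sqrt_mult cis_mult[symmetric] algebra_simps)

lemma borel_measurable_qh_exp_action [measurable]:
  "(\<lambda>p. qh_exp_action l (fst p) (snd p)) \<in> borel_measurable borel"
proof (rule borel_measurable_continuous_onI)
  show "continuous_on UNIV (\<lambda>p. qh_exp_action l (fst p) (snd p))"
    unfolding qh_exp_action_def qh_action_def
  proof (intro continuous_on_vec_lambda)
    show "continuous_on UNIV (\<lambda>p. if j = l then complex_of_real (exp (fst p $ l)) * snd p $ l
        else complex_of_real (sqrt (exp (fst p $ l))) * cis (fst p $ j) * snd p $ j)" for j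
      by (cases "j = l") (auto intro!: continuous_intros)
  qed
qed

lemma borel_measurable_qh_exp_action' [measurable (raw)]:
  assumes "f \<in> borel_measurable M" "g \<in> borel_measurable M"
  shows "(\<lambda>x. qh_exp_action l (f x) (g x)) \<in> borel_measurable M"
proof -
  have "(\<lambda>x. (f x, g x)) \<in> borel_measurable M"
    using measurable_Pair[OF assms] by (simp add: borel_prod)
  from measurable_compose[OF this borel_measurable_qh_exp_action] show ?thesis by simp
qed

text \<open>For z in the Siegel domain, the point of the orbit of z with rho = 1 and z_j > 0 for
  j \<noteq> l, written as a function of qh_moment l z.\<close>
definition qh_moment_section :: "'n::finite \<Rightarrow> real ^ 'n \<Rightarrow> complex ^ 'n" where
  "qh_moment_section l m = (\<chi> j. if j = l
      then complex_of_real (-2 * m $ l) + \<i> * complex_of_real (1 - (\<Sum>i\<in>UNIV-{l}. m $ i))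
      else complex_of_real (sqrt (- m $ j)))"

lemma borel_measurable_qh_moment_section [measurable]:
  "qh_moment_section l \<in> borel_measurable borel"
proof (rule borel_measurable_continuous_onI)
  show "continuous_on UNIV (qh_moment_section l)"
    unfolding qh_moment_section_def
  proof (intro continuous_on_vec_lambda)
    show "continuous_on UNIV (\<lambda>m. if j = l
        then complex_of_real (-2 * m $ l) + \<i> * complex_of_real (1 - (\<Sum>i\<in>UNIV-{l}. m $ i))
        else complex_of_real (sqrt (- m $ j)))" for j
      by (cases "j = l") (auto intro!: continuous_intros)
  qed
qed

lemma qh_exp_action_onto_moment_section:
  assumes "z \<in> siegel l"
  shows "\<exists>w. qh_exp_action l w z = qh_moment_section l (qh_moment l z)"
proof
  define r where "r = rho l z"
  have r: "r > 0" using assms by (simp add: siegel_def r_def)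
  have im: "Im (z $ l) = r + (\<Sum>i\<in>UNIV-{l}. (cmod (z $ i))\<^sup>2)"
    by (simp add: r_def rho_def)
  show "qh_exp_action l (\<chi> j. if j = l then - ln r else - Arg (z $ j)) z
      = qh_moment_section l (qh_moment l z)"
  proof (subst vec_eq_iff, intro allI)
    fix j
    show "qh_exp_action l (\<chi> j. if j = l then - ln r else - Arg (z $ j)) z $ j
        = qh_moment_section l (qh_moment l z) $ j"
    proof (cases "j = l")
      case True
      have "complex_of_real (exp (- ln r)) * z $ l
          = complex_of_real (Re (z $ l) / r) + \<i> * complex_of_real (Im (z $ l) / r)"
        using r by (simp add: exp_minus complex_eq_iff field_simps)
      also have "Im (z $ l) / r = 1 + (\<Sum>i\<in>UNIV-{l}. (cmod (z $ i))\<^sup>2) / r"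
        using r im by (simp add: field_simps)
      finally show ?thesis using True r
        by (simp add: qh_exp_action_def qh_action_def qh_moment_section_def
            r_def[symmetric] qh_moment_def sum_divide_distrib sum_negf)
    next
      case False
      have "complex_of_real (sqrt (exp (- ln r))) * cis (- Arg (z $ j)) * z $ j
          = complex_of_real (sqrt (exp (- ln r))) * complex_of_real (cmod (z $ j))"
        by (simp add: cis_minus_Arg_mult mult.assoc)
      also have "\<dots> = complex_of_real (sqrt ((cmod (z $ j))\<^sup>2 / r))"
        using r by (simp add: exp_minus real_sqrt_divide field_simps)
      finally show ?thesis using False r
        by (simp add: qh_exp_action_def qh_action_def qh_moment_section_def
            r_def[symmetric] qh_moment_def)
    qed
  qed
qed

definition qh_orbit_average :: "'n::finite \<Rightarrow> (complex ^ 'n \<Rightarrow> complex) \<Rightarrow> real ^ 'n \<Rightarrow> complex" where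
  "qh_orbit_average l b m =
     (\<integral>v. indicator (cbox 0 One) v *\<^sub>R b (qh_exp_action l v (qh_moment_section l m)) \<partial>lborel)"

lemma borel_measurable_qh_orbit_average:
  assumes [measurable]: "b \<in> borel_measurable borel"
  shows "qh_orbit_average l b \<in> borel_measurable borel"
proof -
  have "(\<lambda>(m, v). indicator (cbox 0 One) v *\<^sub>R b (qh_exp_action l v (qh_moment_section l m)))
      \<in> borel_measurable (lborel \<Otimes>\<^sub>M lborel)"
    unfolding split_beta' by measurable
  from lborel.borel_measurable_lebesgue_integral[OF this] show ?thesis
    unfolding qh_orbit_average_def by simp
qed

lemma qh_orbit_average_eq:
  fixes l :: "'n::finite"
  assumes [measurable]: "b \<in> borel_measurable borel"
    and "z \<in> siegel l" "AE v in lborel. b (qh_exp_action l v z) = b z"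
  shows "qh_orbit_average l b (qh_moment l z) = b z"
proof -
  obtain w where w: "qh_exp_action l w z = qh_moment_section l (qh_moment l z)"
    using qh_exp_action_onto_moment_section[OF assms(2)] by blast
  have "AE v in lborel. b (qh_exp_action l (w + v) z) = b z"
    using AE_lborel_translate[OF assms(3)] .
  then have ae_eq: "AE v in lborel. indicator (cbox 0 One) v *\<^sub>R b (qh_exp_action l (v + w) z)
      = indicator (cbox 0 One) v *\<^sub>R b z"
    by eventually_elim (simp add: add.commute)
  have "qh_orbit_average l b (qh_moment l z)
      = (\<integral>v. indicator (cbox 0 (One :: real ^ 'n)) v *\<^sub>R b z \<partial>lborel)"
    unfolding qh_orbit_average_def w[symmetric] qh_exp_action_add
    by (rule integral_cong_AE[OF _ _ ae_eq]) measurable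
  also have "\<dots> = b z"
    by (simp add: measure_lborel_unit_box emeasure_lborel_cbox_finite)
  finally show ?thesis .
qed

lemma qh_invariant_imp_moment_symbol:
  assumes a_meas: "a \<in> borel_measurable (lebesgue_on (siegel l))" and "qh_invariant l a"
  shows "ae_factors_through (siegel l) (qh_moment l) a"
proof -
  obtain b where [measurable]: "b \<in> borel_measurable borel"
    and ab: "AE z in lborel. z \<in> siegel l \<longrightarrow> a z = b z"
    using borel_measurable_lebesgue_on_AE_eq_borel[OF a_meas siegel_in_borel] by blast
  have b_inv: "AE z in lborel. z \<in> siegel l \<longrightarrow> b (qh_exp_action l v z) = b z" for v
  proof -
    define t where "t j = cis (v $ j)" for j
    define s where "s = exp (v $ l)"
    have t: "\<forall>j. j \<noteq> l \<longrightarrow> cmod (t j) = 1" and s: "s > 0" by (simp_all add: t_def s_def)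
    have v: "qh_exp_action l v = qh_action l t s"
      by (simp add: qh_exp_action_def t_def[abs_def] s_def)
    have "AE z in lborel. z \<in> siegel l \<longrightarrow> a (qh_action l t s z) = a z"
      using assms(2) t s by (simp add: qh_invariant_def AE_lebesgue_on_iff_AE_lborel)
    with AE_lborel_qh_action[OF t s ab] ab show ?thesis
      by eventually_elim (auto simp: v qh_action_in_siegel[OF t s])
  qed
  have "AE z in lborel. AE v in lborel. z \<in> siegel l \<longrightarrow> b (qh_exp_action l v z) = b z"
    by (rule AE_lborel_AE_lborel_swap[OF _ b_inv]) measurable
  with ab have "AE z in lborel. z \<in> siegel l \<longrightarrow> a z = qh_orbit_average l b (qh_moment l z)"
    by eventually_elim (auto simp: qh_orbit_average_eq)
  moreover have "qh_orbit_average l b \<in> borel_measurable (restrict_space borel (qh_moment l ` siegel l))"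
    by (intro measurable_restrict_space1 borel_measurable_qh_orbit_average) measurable
  ultimately show ?thesis
    unfolding ae_factors_through_def AE_lebesgue_on_iff_AE_lborel[OF siegel_in_borel] by blast
qed

lemma qh_H_borel_fun_of_moment:
  fixes l :: "'n::finite"
  shows "\<exists>\<phi> \<in> borel_measurable borel. \<forall>z. qh_H l z = \<phi> (qh_moment l z)"
proof
  show "(\<lambda>m :: real ^ 'n. \<chi> j. if j = l then -2 * m $ l else - m $ j) \<in> borel_measurable borel"
    by (intro borel_measurable_vec_neg_except continuous_intros)
qed (auto simp: vec_eq_iff qh_moment_def qh_H_def)

lemma qh_moment_borel_fun_of_H:
  fixes l :: "'n::finite"
  shows "\<exists>\<phi> \<in> borel_measurable borel. \<forall>z. qh_moment l z = \<phi> (qh_H l z)"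
proof
  show "(\<lambda>x :: real ^ 'n. \<chi> j. if j = l then - x $ l / 2 else - x $ j) \<in> borel_measurable borel"
    by (intro borel_measurable_vec_neg_except continuous_intros) auto
qed (auto simp: vec_eq_iff qh_moment_def qh_H_def)

lemma Im_div_rho_eq:
  assumes "z \<in> siegel l"
  shows "Im (z $ l) / rho l z = 1 + (\<Sum>i\<in>UNIV-{l}. qh_Htilde l z $ i)"
proof -
  have "rho l z > 0" using assms by (simp add: siegel_def)
  then show ?thesis
    by (simp add: rho_def qh_Htilde_def sum_divide_distrib[symmetric] field_simps)
qed

lemma sum_abs_qh_moment:
  assumes "z \<in> siegel l"
  shows "(\<Sum>i\<in>UNIV-{l}. \<bar>qh_moment l z $ i\<bar>) = (\<Sum>i\<in>UNIV-{l}. qh_Htilde l z $ i)"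
  using assms by (intro sum.cong) (auto simp: siegel_def qh_moment_def qh_Htilde_def)

text \<open>The absolute values keep the denominator positive off the image of the moment map.\<close>
lemma qh_Htilde_borel_fun_of_moment:
  fixes l :: "'n::finite"
  shows "\<exists>\<phi> \<in> borel_measurable borel. \<forall>z \<in> siegel l. qh_Htilde l z = \<phi> (qh_moment l z)"
proof
  have "1 + (\<Sum>i\<in>UNIV-{l}. \<bar>m $ i\<bar>) \<noteq> 0" for m :: "real ^ 'n"
    by (metis add_pos_nonneg less_numeral_extra(1,3) sum_nonneg abs_ge_zero)
  then show "(\<lambda>m :: real ^ 'n. \<chi> j. if j = l then -2 * m $ l / (1 + (\<Sum>i\<in>UNIV-{l}. \<bar>m $ i\<bar>)) else - m $ j)
      \<in> borel_measurable borel"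
    by (intro borel_measurable_vec_neg_except continuous_intros) auto
  show "\<forall>z \<in> siegel l. qh_Htilde l z = (\<chi> j. if j = l
      then -2 * qh_moment l z $ l / (1 + (\<Sum>i\<in>UNIV-{l}. \<bar>qh_moment l z $ i\<bar>))
      else - qh_moment l z $ j)"
  proof
    fix z assume z: "z \<in> siegel l"
    have "Im (z $ l) > 0" "rho l z > 0"
      using z by (auto simp: siegel_def Im_pos_of_siegel)
    then show "qh_Htilde l z = (\<chi> j. if j = l
        then -2 * qh_moment l z $ l / (1 + (\<Sum>i\<in>UNIV-{l}. \<bar>qh_moment l z $ i\<bar>))
        else - qh_moment l z $ j)"
      using Im_div_rho_eq[OF z, symmetric]
      by (auto simp: vec_eq_iff sum_abs_qh_moment[OF z] qh_moment_def qh_Htilde_def field_simps)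
  qed
qed

lemma qh_moment_borel_fun_of_Htilde:
  fixes l :: "'n::finite"
  shows "\<exists>\<phi> \<in> borel_measurable borel. \<forall>z \<in> siegel l. qh_moment l z = \<phi> (qh_Htilde l z)"
proof
  show "(\<lambda>x :: real ^ 'n. \<chi> j. if j = l then - x $ l * (1 + (\<Sum>i\<in>UNIV-{l}. x $ i)) / 2 else - x $ j)
      \<in> borel_measurable borel"
    by (intro borel_measurable_vec_neg_except continuous_intros) auto
  show "\<forall>z \<in> siegel l. qh_moment l z = (\<chi> j. if j = l
      then - qh_Htilde l z $ l * (1 + (\<Sum>i\<in>UNIV-{l}. qh_Htilde l z $ i)) / 2
      else - qh_Htilde l z $ j)"
  proof
    fix z assume z: "z \<in> siegel l"
    have pos: "Im (z $ l) > 0" "rho l z > 0"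
      using z by (auto simp: siegel_def Im_pos_of_siegel)
    then have "qh_moment l z $ l = - qh_Htilde l z $ l * (Im (z $ l) / rho l z) / 2"
      by (simp add: qh_moment_def qh_Htilde_def)
    then have "qh_moment l z $ l = - qh_Htilde l z $ l * (1 + (\<Sum>i\<in>UNIV-{l}. qh_Htilde l z $ i)) / 2"
      by (simp only: Im_div_rho_eq[OF z])
    moreover have "qh_moment l z $ j = - qh_Htilde l z $ j" if "j \<noteq> l" for j
      using that pos by (simp add: qh_moment_def qh_Htilde_def)
    ultimately show "qh_moment l z = (\<chi> j. if j = l
        then - qh_Htilde l z $ l * (1 + (\<Sum>i\<in>UNIV-{l}. qh_Htilde l z $ i)) / 2
        else - qh_Htilde l z $ j)"
      by (auto simp: vec_eq_iff)
  qed
qed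

theorem lemma5p4:
  fixes l :: "'n::finite" and a :: "complex ^ 'n \<Rightarrow> complex"
  assumes "Linfty_on (siegel l) a"
  shows
   "((\<exists>g :: real ^ 'n \<Rightarrow> complex.
        g \<in> borel_measurable (restrict_space borel (qh_moment l ` siegel l)) \<and>
        (AE z in lebesgue_on (siegel l). a z = g (qh_moment l z)))
     \<longleftrightarrow> (\<forall>t s. (\<forall>j. j \<noteq> l \<longrightarrow> cmod (t j) = 1) \<longrightarrow> s > 0 \<longrightarrow>
        (AE z in lebesgue_on (siegel l). a (qh_action l t s z) = a z)))
    \<and> ((\<exists>g :: real ^ 'n \<Rightarrow> complex.
        g \<in> borel_measurable (restrict_space borel (qh_moment l ` siegel l)) \<and>
        (AE z in lebesgue_on (siegel l). a z = g (qh_moment l z)))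
     \<longleftrightarrow> (\<exists>f :: real ^ 'n \<Rightarrow> complex.
        f \<in> borel_measurable (restrict_space borel (qh_H l ` siegel l)) \<and>
        (AE z in lebesgue_on (siegel l). a z = f (qh_H l z))))
    \<and> ((\<exists>g :: real ^ 'n \<Rightarrow> complex.
        g \<in> borel_measurable (restrict_space borel (qh_moment l ` siegel l)) \<and>
        (AE z in lebesgue_on (siegel l). a z = g (qh_moment l z)))
     \<longleftrightarrow> (\<exists>f :: real ^ 'n \<Rightarrow> complex.
        f \<in> borel_measurable (restrict_space borel (qh_Htilde l ` siegel l)) \<and>
        (AE z in lebesgue_on (siegel l). a z = f (qh_Htilde l z))))"
proof -
  have "a \<in> borel_measurable (lebesgue_on (siegel l))"
    using assms unfolding Linfty_on_def by blast
  then have "ae_factors_through (siegel l) (qh_moment l) a \<longleftrightarrow> qh_invariant l a"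
    using qh_invariant_imp_moment_symbol qh_moment_symbol_imp_invariant by iprover
  moreover have "ae_factors_through (siegel l) (qh_moment l) a
      \<longleftrightarrow> ae_factors_through (siegel l) (qh_H l) a"
    by (intro iffI; erule ae_factors_through_reparam[rotated])
      (use qh_H_borel_fun_of_moment qh_moment_borel_fun_of_H in blast)+
  moreover have "ae_factors_through (siegel l) (qh_moment l) a
      \<longleftrightarrow> ae_factors_through (siegel l) (qh_Htilde l) a"
    by (intro iffI; erule ae_factors_through_reparam[rotated])
      (rule qh_Htilde_borel_fun_of_moment qh_moment_borel_fun_of_Htilde)+
  ultimately show ?thesis
    unfolding ae_factors_through_def qh_invariant_def by (simp only:)
qed

end
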